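(* If $V$ is an $\Re$-module containing a vector $v$ with $Bv=\theta_0^*v$, $(B-\theta_1^* )(A-\theta_0)v=\varphi_1v$, $\alpha v=\zeta v$, $\beta v=\zeta^*v$, $\delta v=\eta v$, then there exists a unique $\Re$-module homomorphism $M_\nu(a,b,c)\to V$ sending $m_0$ to $v$.
   Context: $\mathbb F$ is algebraically closed with $\operatorname{char}\mathbb F\ne2$. The Racah algebra $\Re$ is the unital associative $\mathbb F$-algebra with generators $A,B,C,D$ and relations $[A,B]=[B,C]=[C,A]=2D$ together with the requirement that each of $\alpha:=[A,D]+AC-BA$, $\beta:=[B,D]+BA-CB$, $\gamma:=[C,D]+CB-AC$ is central in $\Re$; $\delta:=A+B+C$. For $a,b,c,\nu\in\mathbb F$ and $i\in\mathbb Z$: $\theta_i=(a+\tfrac\nu2-i)(a+\tfrac\nu2-i+1)$, $\theta_i^*=(b+\tfrac\nu2-i)(b+\tfrac\nu2-i+1)$, $\varphi_i=i(i-\nu-1)(a+b+c+\tfrac\nu2-i+2)(a+b-c+\tfrac\nu2-i+1)$, $\zeta=(c-b)(c+b+1)(a-\tfrac\nu2)(a+\tfrac\nu2+1)$, $\zeta^*=(a-c)(a+c+1)(b-\tfrac\nu2)(b+\tfrac\nu2+1)$, $\eta=\tfrac\nu2(\tfrac\nu2+1)+a(a+1)+b(b+1)+c(c+1)$. $M_\nu(a,b,c)$ is the $\Re$-module with $\mathbb F$-basis $\{m_i\}_{i\ge0}$ such that $Am_i=\theta_im_i+m_{i+1}$ ($i\ge0$), $Bm_0=\theta_0^*m_0$,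 $Bm_i=\theta_i^*m_i+\varphi_im_{i-1}$ ($i\ge1$), and $\alpha,\beta,\delta$ act as $\zeta,\zeta^*,\eta$. *)

theory Defs
  imports "HOL-Computational_Algebra.Polynomial"
begin

definition opcomm :: "('v::ab_group_add \<Rightarrow> 'v) \<Rightarrow> ('v \<Rightarrow> 'v) \<Rightarrow> 'v \<Rightarrow> 'v" where
  "opcomm X Y = (\<lambda>x. X (Y x) - Y (X x))"

definition rac_alpha :: "('v::ab_group_add \<Rightarrow> 'v) \<Rightarrow> ('v \<Rightarrow> 'v) \<Rightarrow> ('v \<Rightarrow> 'v) \<Rightarrow> ('v \<Rightarrow> 'v) \<Rightarrow> 'v \<Rightarrow> 'v" where
  "rac_alpha A B C D = (\<lambda>x. opcomm A D x + A (C x) - B (A x))"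
definition rac_beta :: "('v::ab_group_add \<Rightarrow> 'v) \<Rightarrow> ('v \<Rightarrow> 'v) \<Rightarrow> ('v \<Rightarrow> 'v) \<Rightarrow> ('v \<Rightarrow> 'v) \<Rightarrow> 'v \<Rightarrow> 'v" where
  "rac_beta A B C D = (\<lambda>x. opcomm B D x + B (A x) - C (B x))"
definition rac_gamma :: "('v::ab_group_add \<Rightarrow> 'v) \<Rightarrow> ('v \<Rightarrow> 'v) \<Rightarrow> ('v \<Rightarrow> 'v) \<Rightarrow> ('v \<Rightarrow> 'v) \<Rightarrow> 'v \<Rightarrow> 'v" where
  "rac_gamma A B C D = (\<lambda>x. opcomm C D x + C (B x) - A (C x))"
definition rac_delta :: "('v::ab_group_add \<Rightarrow> 'v) \<Rightarrow> ('v \<Rightarrow> 'v) \<Rightarrow> ('v \<Rightarrow> 'v) \<Rightarrow> 'v \<Rightarrow> 'v" where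
  "rac_delta A B C = (\<lambda>x. A x + B x + C x)"

definition commutes_with_gens ::
  "('v \<Rightarrow> 'v) \<Rightarrow> ('v \<Rightarrow> 'v) \<Rightarrow> ('v \<Rightarrow> 'v) \<Rightarrow> ('v \<Rightarrow> 'v) \<Rightarrow> ('v \<Rightarrow> 'v) \<Rightarrow> bool" where
  "commutes_with_gens Z A B C D \<longleftrightarrow>
     (\<forall>x. Z (A x) = A (Z x)) \<and> (\<forall>x. Z (B x) = B (Z x)) \<and>
     (\<forall>x. Z (C x) = C (Z x)) \<and> (\<forall>x. Z (D x) = D (Z x))"

(* Central in the algebra = commutes with all generators. *)
definition racah_module ::
  "('f::field \<Rightarrow> 'v::ab_group_add \<Rightarrow> 'v) \<Rightarrow> ('v \<Rightarrow> 'v) \<Rightarrow> ('v \<Rightarrow> 'v) \<Rightarrow> ('v \<Rightarrow> 'v) \<Rightarrow> ('v \<Rightarrow> 'v) \<Rightarrow> bool" where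
  "racah_module scale A B C D \<longleftrightarrow>
     vector_space scale \<and>
     module_hom scale scale A \<and> module_hom scale scale B \<and>
     module_hom scale scale C \<and> module_hom scale scale D \<and>
     (\<forall>x. opcomm A B x = scale 2 (D x)) \<and>
     (\<forall>x. opcomm B C x = scale 2 (D x)) \<and>
     (\<forall>x. opcomm C A x = scale 2 (D x)) \<and>
     commutes_with_gens (rac_alpha A B C D) A B C D \<and>
     commutes_with_gens (rac_beta A B C D) A B C D \<and>
     commutes_with_gens (rac_gamma A B C D) A B C D"

definition racah_hom ::
  "('f::field \<Rightarrow> 'u::ab_group_add \<Rightarrow> 'u) \<Rightarrow> ('u \<Rightarrow> 'u) \<Rightarrow> ('u \<Rightarrow> 'u) \<Rightarrow> ('u \<Rightarrow> 'u) \<Rightarrow> ('u \<Rightarrow> 'u) \<Rightarrow>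
   ('f \<Rightarrow> 'v::ab_group_add \<Rightarrow> 'v) \<Rightarrow> ('v \<Rightarrow> 'v) \<Rightarrow> ('v \<Rightarrow> 'v) \<Rightarrow> ('v \<Rightarrow> 'v) \<Rightarrow> ('v \<Rightarrow> 'v) \<Rightarrow>
   ('u \<Rightarrow> 'v) \<Rightarrow> bool" where
  "racah_hom s1 A1 B1 C1 D1 s2 A2 B2 C2 D2 f \<longleftrightarrow>
     module_hom s1 s2 f \<and>
     (\<forall>x. f (A1 x) = A2 (f x)) \<and> (\<forall>x. f (B1 x) = B2 (f x)) \<and>
     (\<forall>x. f (C1 x) = C2 (f x)) \<and> (\<forall>x. f (D1 x) = D2 (f x))"

definition th :: "'f::field \<Rightarrow> 'f \<Rightarrow> int \<Rightarrow> 'f" where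
  "th a \<nu> i = (a + \<nu>/2 - of_int i) * (a + \<nu>/2 - of_int i + 1)"
definition ths :: "'f::field \<Rightarrow> 'f \<Rightarrow> int \<Rightarrow> 'f" where
  "ths b \<nu> i = (b + \<nu>/2 - of_int i) * (b + \<nu>/2 - of_int i + 1)"
definition phi :: "'f::field \<Rightarrow> 'f \<Rightarrow> 'f \<Rightarrow> 'f \<Rightarrow> int \<Rightarrow> 'f" where
  "phi a b c \<nu> i = of_int i * (of_int i - \<nu> - 1) * (a + b + c + \<nu>/2 - of_int i + 2)
                     * (a + b - c + \<nu>/2 - of_int i + 1)"
definition zeta :: "'f::field \<Rightarrow> 'f \<Rightarrow> 'f \<Rightarrow> 'f \<Rightarrow> 'f" where
  "zeta a b c \<nu> = (c - b) * (c + b + 1) * (a - \<nu>/2) * (a + \<nu>/2 + 1)"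
definition zetas :: "'f::field \<Rightarrow> 'f \<Rightarrow> 'f \<Rightarrow> 'f \<Rightarrow> 'f" where
  "zetas a b c \<nu> = (a - c) * (a + c + 1) * (b - \<nu>/2) * (b + \<nu>/2 + 1)"
definition eta :: "'f::field \<Rightarrow> 'f \<Rightarrow> 'f \<Rightarrow> 'f \<Rightarrow> 'f" where
  "eta a b c \<nu> = \<nu>/2 * (\<nu>/2 + 1) + a * (a + 1) + b * (b + 1) + c * (c + 1)"

(* The module M_nu(a,b,c): underlying space = finitely supported sequences,
   represented as 'f poly, with basis m_i = monom 1 i; scalar multiplication smult. *)
definition mvec :: "nat \<Rightarrow> 'f::field poly" where
  "mvec i = monom 1 i"

definition MA_basis :: "'f::field \<Rightarrow> 'f \<Rightarrow> 'f \<Rightarrow> 'f \<Rightarrow> nat \<Rightarrow> 'f poly" where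
  "MA_basis a b c \<nu> i = smult (th a \<nu> (int i)) (mvec i) + mvec (Suc i)"
definition MB_basis :: "'f::field \<Rightarrow> 'f \<Rightarrow> 'f \<Rightarrow> 'f \<Rightarrow> nat \<Rightarrow> 'f poly" where
  "MB_basis a b c \<nu> i = (if i = 0 then smult (ths b \<nu> 0) (mvec 0)
     else smult (ths b \<nu> (int i)) (mvec i) + smult (phi a b c \<nu> (int i)) (mvec (i - 1)))"

definition MA :: "'f::field \<Rightarrow> 'f \<Rightarrow> 'f \<Rightarrow> 'f \<Rightarrow> 'f poly \<Rightarrow> 'f poly" where
  "MA a b c \<nu> p = (\<Sum>i\<le>degree p. smult (coeff p i) (MA_basis a b c \<nu> i))"
definition MB :: "'f::field \<Rightarrow> 'f \<Rightarrow> 'f \<Rightarrow> 'f \<Rightarrow> 'f poly \<Rightarrow> 'f poly" where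
  "MB a b c \<nu> p = (\<Sum>i\<le>degree p. smult (coeff p i) (MB_basis a b c \<nu> i))"
(* C is forced by delta = A + B + C acting as eta *)
definition MC :: "'f::field \<Rightarrow> 'f \<Rightarrow> 'f \<Rightarrow> 'f \<Rightarrow> 'f poly \<Rightarrow> 'f poly" where
  "MC a b c \<nu> p = smult (eta a b c \<nu>) p - MA a b c \<nu> p - MB a b c \<nu> p"
(* D is forced by [A,B] = 2D *)
definition MD :: "'f::field \<Rightarrow> 'f \<Rightarrow> 'f \<Rightarrow> 'f \<Rightarrow> 'f poly \<Rightarrow> 'f poly" where
  "MD a b c \<nu> p = smult (1/2) (MA a b c \<nu> (MB a b c \<nu> p) - MB a b c \<nu> (MA a b c \<nu> p))"

end

theory Submission
  imports Defs
begin

text \<open>Put \<open>v\<^sub>0 = v\<close> and \<open>v\<^sub>i\<^sub>+\<^sub>1 = (A - \<theta>\<^sub>i) v\<^sub>i\<close>, the candidate images of the basis vectors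
  \<open>m\<^sub>i\<close>. Since \<open>\<alpha>\<close> and \<open>\<delta>\<close> commute with \<open>A\<close>, they act on every \<open>v\<^sub>i\<close> by the scalars \<open>\<zeta>\<close> and \<open>\<eta>\<close>.
  Eliminating \<open>C\<close> through \<open>\<delta>\<close> and \<open>D\<close> through \<open>[A,B] = 2D\<close>, the equation \<open>\<alpha> v\<^sub>i = \<zeta> v\<^sub>i\<close>
  becomes a relation in \<open>A\<close> and \<open>B\<close> alone that determines \<open>B v\<^sub>i\<^sub>+\<^sub>2\<close> from \<open>B v\<^sub>i\<close> and
  \<open>B v\<^sub>i\<^sub>+\<^sub>1\<close>; by induction \<open>B\<close> acts on the \<open>v\<^sub>i\<close> as on the \<open>m\<^sub>i\<close>, so \<open>m\<^sub>i \<mapsto> v\<^sub>i\<close> is a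
  homomorphism. It is the only one because \<open>m\<^sub>i\<^sub>+\<^sub>1 = (A - \<theta>\<^sub>i) m\<^sub>i\<close>.\<close>

primrec shift_chain :: "('v::ab_group_add \<Rightarrow> 'v) \<Rightarrow> ('f \<Rightarrow> 'v \<Rightarrow> 'v) \<Rightarrow> (nat \<Rightarrow> 'f) \<Rightarrow> 'v \<Rightarrow> nat \<Rightarrow> 'v"
  where
    "shift_chain A scale t v 0 = v"
  | "shift_chain A scale t v (Suc i) =
       A (shift_chain A scale t v i) - scale (t i) (shift_chain A scale t v i)"

lemma shift_chain_eigenvector:
  assumes "module_hom scale scale A" "module_hom scale scale L"
    and "\<And>x. L (A x) = A (L x)" and "L v = scale k v"
  shows "L (shift_chain A scale t v i) = scale k (shift_chain A scale t v i)"
proof -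
  interpret A: module_hom scale scale A by fact
  interpret L: module_hom scale scale L by fact
  show ?thesis
    by (induction i)
      (simp_all add: assms(3,4) L.diff L.scale A.scale A.m1.scale_right_diff_distrib mult.commute)
qed

definition poly_extend :: "('f::field \<Rightarrow> 'v::ab_group_add \<Rightarrow> 'v) \<Rightarrow> (nat \<Rightarrow> 'v) \<Rightarrow> 'f poly \<Rightarrow> 'v"
  where "poly_extend scale w p = (\<Sum>j\<le>degree p. scale (coeff p j) (w j))"

lemma module_smult_poly: "module (smult :: 'f::field \<Rightarrow> 'f poly \<Rightarrow> 'f poly)"
  by unfold_locales (simp_all add: smult_add_right smult_add_left)

context vector_space
begin

lemma poly_extend_eq_sum_lessThan:
  assumes "degree p < n"
  shows "poly_extend scale w p = (\<Sum>j<n. scale (coeff p j) (w j))"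
  unfolding poly_extend_def using assms
  by (intro sum.mono_neutral_right[symmetric]) (auto simp: coeff_eq_0)

lemma module_hom_poly_extend: "module_hom smult scale (poly_extend scale w)"
proof -
  have add: "poly_extend scale w (p + q) = poly_extend scale w p + poly_extend scale w q" for p q
  proof -
    define n where "n = Suc (max (degree p) (degree q))"
    have "degree (p + q) < n" "degree p < n" "degree q < n"
      using degree_add_le_max[of p q] by (auto simp: n_def)
    then show ?thesis
      by (simp add: poly_extend_eq_sum_lessThan scale_left_distrib sum.distrib)
  qed
  have smult: "poly_extend scale w (smult r p) = scale r (poly_extend scale w p)" for r p
  proof -
    define n where "n = Suc (degree p)"
    have "degree (smult r p) < n" "degree p < n"
      using degree_smult_le[of r p] by (auto simp: n_def)
    then show ?thesis
      by (simp add: poly_extend_eq_sum_lessThan scale_sum_right)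
  qed
  show ?thesis
    using add smult module_smult_poly module_axioms by (simp add: module_hom_iff)
qed

lemma poly_extend_monom: "poly_extend scale w (monom r k) = scale r (w k)"
proof -
  have "poly_extend scale w (monom r k) = (\<Sum>j<Suc k. scale (coeff (monom r k) j) (w j))"
    using degree_monom_le[of r k] by (intro poly_extend_eq_sum_lessThan) simp
  also have "\<dots> = (\<Sum>j<Suc k. if k = j then scale r (w j) else 0)"
    by (intro sum.cong) auto
  finally show ?thesis by simp
qed

lemma module_hom_poly_eq_poly_extend:
  assumes "module_hom smult scale g" and "\<And>j. g (monom 1 j) = w j"
  shows "g = poly_extend scale w"
proof
  interpret g: module_hom smult scale g by fact
  fix p
  have "g p = g (\<Sum>j\<le>degree p. smult (coeff p j) (monom 1 j))"
    by (simp add: smult_monom poly_as_sum_of_monoms)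
  then show "g p = poly_extend scale w p"
    by (simp add: g.sum g.scale assms(2) poly_extend_def)
qed

lemma poly_extend_intertwines:
  assumes "module_hom scale scale T" and "\<And>j. poly_extend scale w (X j) = T (w j)"
  shows "poly_extend scale w (\<Sum>j\<le>degree p. smult (coeff p j) (X j)) = T (poly_extend scale w p)"
proof -
  interpret T: module_hom scale scale T by fact
  interpret F: module_hom smult scale "poly_extend scale w" by (rule module_hom_poly_extend)
  have "poly_extend scale w (\<Sum>j\<le>degree p. smult (coeff p j) (X j))
      = (\<Sum>j\<le>degree p. scale (coeff p j) (T (w j)))"
    by (simp add: F.sum F.scale assms(2))
  then show ?thesis
    by (simp add: T.sum T.scale poly_extend_def)
qed

lemma poly_extend_eigenvector:
  assumes "module_hom scale scale T" and "\<And>j. T (w j) = scale k (w j)"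
  shows "T (poly_extend scale w p) = scale k (poly_extend scale w p)"
proof -
  interpret T: module_hom scale scale T by fact
  show ?thesis
    by (simp add: poly_extend_def T.sum T.scale assms(2) scale_sum_right mult.commute)
qed

lemma poly_extend_mvec: "poly_extend scale w (mvec k) = w k"
  unfolding mvec_def poly_extend_monom by simp

end

lemma th_diff_square: "(th a \<nu> (i - 1) - th a \<nu> i)^2 = 2 * (th a \<nu> (i - 1) + th a \<nu> i)"
proof -
  define x where "x = a + \<nu> / 2 - of_int i"
  have "a + \<nu> / 2 - of_int (i - 1) = x + 1" by (simp add: x_def)
  then show ?thesis
    unfolding th_def x_def[symmetric] by (simp add: power2_eq_square algebra_simps)
qed

lemma ths_second_diff: "ths b \<nu> i - 2 * ths b \<nu> (i + 1) + ths b \<nu> (i + 2) = 2"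
proof -
  define x where "x = b + \<nu> / 2 - of_int i"
  have "b + \<nu> / 2 - of_int (i + 1) = x - 1" "b + \<nu> / 2 - of_int (i + 2) = x - 2"
    by (simp_all add: x_def)
  then show ?thesis
    unfolding ths_def x_def[symmetric] by (simp add: algebra_simps)
qed

lemma phi_zeta_relation:
  fixes a b c \<nu> :: "'f::field"
  assumes "(2::'f) \<noteq> 0"
  shows "phi a b c \<nu> i * (th a \<nu> (i - 1) - th a \<nu> i - 2)
       + phi a b c \<nu> (i + 1) * (th a \<nu> (i + 1) - th a \<nu> i - 2)
       + 2 * th a \<nu> i * (eta a b c \<nu> - th a \<nu> i - 2 * ths b \<nu> i) = 2 * zeta a b c \<nu>"
proof -
  define n where "n = \<nu>/2"
  have nu: "\<nu> = 2*n" using assms unfolding n_def by simp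
  show ?thesis
    unfolding th_def ths_def phi_def eta_def zeta_def n_def[symmetric]
    unfolding nu
    by (simp add: algebra_simps)
qed

lemma phi_second_diff:
  fixes a b c \<nu> :: "'f::field"
  assumes "(2::'f) \<noteq> 0"
  shows "phi a b c \<nu> i - 2 * phi a b c \<nu> (i + 1) + phi a b c \<nu> (i + 2)
       + (th a \<nu> (i + 1) - th a \<nu> i) * (ths b \<nu> i - ths b \<nu> (i + 1))
       + 2 * (eta a b c \<nu> - th a \<nu> i - th a \<nu> (i + 1) - ths b \<nu> i - ths b \<nu> (i + 1)) = 0"
proof -
  define n where "n = \<nu>/2"
  have nu: "\<nu> = 2*n" using assms unfolding n_def by simp
  show ?thesis
    unfolding th_def ths_def phi_def eta_def n_def[symmetric]
    unfolding nu
    by (simp add: algebra_simps)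
qed

lemma phi_0 [simp]: "phi a b c \<nu> 0 = 0"
  by (simp add: phi_def)

lemma MA_mvec: "MA a b c \<nu> (mvec k) = MA_basis a b c \<nu> k"
proof -
  have "MA a b c \<nu> (mvec k) = (\<Sum>j\<le>k. if k = j then MA_basis a b c \<nu> j else 0)"
    unfolding MA_def mvec_def degree_monom_eq[OF one_neq_zero] by (intro sum.cong) auto
  then show ?thesis by simp
qed

locale racah_rep =
  fixes scale :: "'f::field \<Rightarrow> 'v::ab_group_add \<Rightarrow> 'v"
    and A B C D :: "'v \<Rightarrow> 'v"
  assumes racah_module: "racah_module scale A B C D"
    and two_nonzero: "(2::'f) \<noteq> 0"
begin

sublocale vector_space scale
  using racah_module by (simp add: racah_module_def)

sublocale A: module_hom scale scale A
  using racah_module by (simp add: racah_module_def)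

sublocale B: module_hom scale scale B
  using racah_module by (simp add: racah_module_def)

sublocale C: module_hom scale scale C
  using racah_module by (simp add: racah_module_def)

sublocale D: module_hom scale scale D
  using racah_module by (simp add: racah_module_def)

lemma D_eq: "D x = scale (1/2) (A (B x) - B (A x))"
proof -
  have "A (B x) - B (A x) = scale 2 (D x)"
    using racah_module by (simp add: racah_module_def opcomm_def)
  then show ?thesis using two_nonzero by simp
qed

lemma rac_delta_A_commute: "rac_delta A B C (A x) = A (rac_delta A B C x)"
proof -
  have "opcomm C A x = opcomm A B x"
    using racah_module by (simp add: racah_module_def)
  then have "C (A x) = A (B x) - B (A x) + A (C x)"
    by (simp add: opcomm_def algebra_simps)
  then show ?thesis
    by (simp add: rac_delta_def A.add algebra_simps)
qed

lemma rac_alpha_A_commute: "rac_alpha A B C D (A x) = A (rac_alpha A B C D x)"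
  using racah_module by (simp add: racah_module_def commutes_with_gens_def)

lemma module_hom_rac_delta: "module_hom scale scale (rac_delta A B C)"
  by unfold_locales (simp_all add: rac_delta_def A.add B.add C.add A.scale B.scale C.scale
      scale_right_distrib algebra_simps)

lemma module_hom_rac_alpha: "module_hom scale scale (rac_alpha A B C D)"
  by unfold_locales (simp_all add: rac_alpha_def opcomm_def A.add B.add C.add D.add
      A.scale B.scale C.scale D.scale scale_right_distrib scale_right_diff_distrib algebra_simps)

lemma rac_alpha_eq_of_rac_delta:
  assumes "rac_delta A B C x = scale h x"
  shows "rac_alpha A B C D x =
    scale (1/2) (A (A (B x)) - A (B (A x))) - scale (1/2) (A (B (A x)) - B (A (A x)))
    + A (scale h x - A x - B x) - B (A x)"
proof -
  have "C x = scale h x - A x - B x"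
    using assms by (simp add: rac_delta_def algebra_simps)
  then show ?thesis
    by (simp add: rac_alpha_def opcomm_def D_eq A.scale A.diff)
qed

lemma B_step:
  assumes Au: "A u = scale p1 e1 + scale t0 u"
    and Ae1: "A e1 = e2 + scale t1 e1" and Ae2: "A e2 = e3 + scale t2 e2"
    and Be1: "B e1 = scale s1 e1 + u" and Be2: "B e2 = scale s2 e2 + scale p2 e1"
    and delta: "rac_delta A B C e1 = scale h e1" and alpha: "rac_alpha A B C D e1 = scale z e1"
    and th_rel: "(t0 - t1)^2 = 2 * (t0 + t1)"
    and e1_rel: "p1 * (t0 - t1 - 2) + p2 * (t2 - t1 - 2) + 2 * t1 * (h - t1 - 2 * s1) = 2 * z"
    and e2_rel: "p1 - 2 * p2 + p3 + (t2 - t1) * (s1 - s2) + 2 * (h - t1 - t2 - s1 - s2) = 0"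
    and s_rel: "s1 - 2 * s2 + s3 = 2"
  shows "B e3 = scale s3 e3 + scale p3 e2"
proof -
  define L where "L = (\<lambda>x0 x1 x2 x3 x4.
    scale x0 u + scale x1 e1 + scale x2 e2 + scale x3 e3 + scale x4 (B e3))"
  have AL: "A (L x0 x1 x2 0 0) = L (t0*x0) (p1*x0+t1*x1) (x1+t2*x2) x2 0" for x0 x1 x2
    unfolding L_def by (simp add: A.add A.scale Au Ae1 Ae2 algebra_simps)
  have BL: "B (L 0 x1 x2 x3 0) = L x1 (s1*x1+p2*x2) (s2*x2) 0 x3" for x1 x2 x3
    unfolding L_def by (simp add: B.add B.scale Be1 Be2 algebra_simps)
  have L_add: "L x0 x1 x2 x3 x4 + L y0 y1 y2 y3 y4 = L (x0+y0) (x1+y1) (x2+y2) (x3+y3) (x4+y4)"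
    for x0 x1 x2 x3 x4 y0 y1 y2 y3 y4
    unfolding L_def by (simp add: algebra_simps)
  have L_diff: "L x0 x1 x2 x3 x4 - L y0 y1 y2 y3 y4 = L (x0-y0) (x1-y1) (x2-y2) (x3-y3) (x4-y4)"
    for x0 x1 x2 x3 x4 y0 y1 y2 y3 y4
    unfolding L_def by (simp add: algebra_simps)
  have L_scale: "scale r (L x0 x1 x2 x3 x4) = L (r*x0) (r*x1) (r*x2) (r*x3) (r*x4)"
    for r x0 x1 x2 x3 x4
    unfolding L_def by (simp add: algebra_simps)
  have L_cong: "x0 = y0 \<Longrightarrow> x1 = y1 \<Longrightarrow> x2 = y2 \<Longrightarrow> x3 = y3 \<Longrightarrow> x4 = y4 \<Longrightarrow>
      L x0 x1 x2 x3 x4 = L y0 y1 y2 y3 y4" for x0 x1 x2 x3 x4 y0 y1 y2 y3 y4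
    by simp
  define k :: 'f where "k = 1 / 2"
  have k: "2 * k = 1" using two_nonzero by (simp add: k_def)
  have z_eq: "z = k * (p1 * (t0 - t1 - 2) + p2 * (t2 - t1 - 2) + 2 * t1 * (h - t1 - 2 * s1))"
    unfolding e1_rel using k by (simp add: mult.assoc[symmetric] mult.commute[of k 2])
  have p3_eq: "p3 = 2 * p2 - p1 - (t2 - t1) * (s1 - s2) - 2 * (h - t1 - t2 - s1 - s2)"
    using e2_rel by (simp add: algebra_simps)
  have s3_eq: "s3 = 2 - s1 + 2 * s2"
    using s_rel by (simp add: algebra_simps)
  have e1_L: "e1 = L 0 1 0 0 0"
    unfolding L_def by simp
  txt \<open>The coefficients of \<open>u, e1, e2, e3\<close> in the expansion of \<open>\<alpha> e1\<close> are \<open>0, z, -p3/2, -s3/2\<close>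
    exactly by the four scalar relations, and \<open>B e3\<close> enters with coefficient \<open>1/2\<close>.\<close>
  have expand: "rac_alpha A B C D e1 = L 0 z (- k * p3) (- k * s3) k"
    unfolding rac_alpha_eq_of_rac_delta[OF delta] unfolding e1_L
    apply (simp only: AL BL L_add L_diff L_scale mult_zero_right mult_zero_left mult_1_right
        mult_1_left add_0_left add_0_right diff_zero diff_0 diff_0_right)
    unfolding k_def[symmetric]
    apply (rule L_cong)
    subgoal using th_rel k by algebra
    subgoal unfolding z_eq using k by algebra
    subgoal unfolding p3_eq using k by algebra
    subgoal unfolding s3_eq using k by algebra
    subgoal by simp
    done
  then have "scale k (B e3 - scale s3 e3 - scale p3 e2) = 0"
    using alpha by (simp add: L_def algebra_simps)
  moreover have "k \<noteq> 0" using k by auto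
  ultimately show ?thesis by (simp add: diff_eq_eq add.commute)
qed

lemma racah_hom_from_M_unique:
  assumes "racah_hom smult (MA a b c \<nu>) (MB a b c \<nu>) (MC a b c \<nu>) (MD a b c \<nu>) scale A B C D g"
  shows "g = poly_extend scale (shift_chain A scale (\<lambda>i. th a \<nu> (int i)) (g (mvec 0)))"
proof (rule module_hom_poly_eq_poly_extend)
  show g_hom: "module_hom smult scale g"
    using assms by (simp add: racah_hom_def)
  interpret g: module_hom smult scale g by (fact g_hom)
  have g_A: "g (MA a b c \<nu> p) = A (g p)" for p
    using assms by (simp add: racah_hom_def)
  show "g (monom 1 j) = shift_chain A scale (\<lambda>i. th a \<nu> (int i)) (g (mvec 0)) j" for j
  proof (induction j)
    case (Suc j)
    have "mvec (Suc j) = MA a b c \<nu> (mvec j) - smult (th a \<nu> (int j)) (mvec j)"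
      by (simp add: MA_mvec MA_basis_def)
    then show ?case
      using Suc by (simp add: mvec_def g.diff g.scale g_A)
  qed (simp add: mvec_def)
qed

end

locale racah_rep_vector = racah_rep scale A B C D
  for scale :: "'f::field \<Rightarrow> 'v::ab_group_add \<Rightarrow> 'v" and A B C D +
  fixes a b c \<nu> :: 'f and v :: 'v
  assumes B_v: "B v = scale (ths b \<nu> 0) v"
    and B_v1: "(let w = A v - scale (th a \<nu> 0) v in B w - scale (ths b \<nu> 1) w)
                 = scale (phi a b c \<nu> 1) v"
    and rac_alpha_v: "rac_alpha A B C D v = scale (zeta a b c \<nu>) v"
    and rac_delta_v: "rac_delta A B C v = scale (eta a b c \<nu>) v"
begin

definition vec :: "nat \<Rightarrow> 'v"
  where "vec = shift_chain A scale (\<lambda>i. th a \<nu> (int i)) v"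

lemma A_vec: "A (vec i) = vec (Suc i) + scale (th a \<nu> (int i)) (vec i)"
  by (simp add: vec_def)

lemma rac_delta_vec: "rac_delta A B C (vec i) = scale (eta a b c \<nu>) (vec i)"
  unfolding vec_def
  using module_hom_rac_delta rac_delta_A_commute rac_delta_v
  by (rule shift_chain_eigenvector[OF A.module_hom_axioms])

lemma rac_alpha_vec: "rac_alpha A B C D (vec i) = scale (zeta a b c \<nu>) (vec i)"
  unfolding vec_def
  using module_hom_rac_alpha rac_alpha_A_commute rac_alpha_v
  by (rule shift_chain_eigenvector[OF A.module_hom_axioms])

lemma B_vec:
  "B (vec i) = scale (ths b \<nu> (int i)) (vec i) + scale (phi a b c \<nu> (int i)) (vec (i - 1))"
proof (induction i rule: less_induct)
  case (less n)
  consider "n = 0" | "n = 1" | i where "n = Suc (Suc i)"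
    by (metis One_nat_def not0_implies_Suc)
  then show ?case
  proof cases
    case 1
    then show ?thesis by (simp add: vec_def B_v)
  next
    case 2
    then show ?thesis
      using B_v1 by (simp add: vec_def Let_def diff_eq_eq add.commute)
  next
    case 3
    define u where "u = scale (phi a b c \<nu> (int i)) (vec (i - 1))"
    have A_u: "A u = scale (phi a b c \<nu> (int i)) (vec i) + scale (th a \<nu> (int i - 1)) u"
    proof (cases i)
      case 0
      then show ?thesis by (simp add: u_def)
    next
      case (Suc j)
      then have "int i - 1 = int j" by simp
      then show ?thesis
        using Suc by (simp add: u_def A.scale A_vec scale_right_distrib scale_left_commute)
    qed
    have int_Suc: "int (Suc i) = int i + 1" "int (Suc (Suc i)) = int i + 2" by simp_all
    have "B (vec (Suc (Suc i))) =
        scale (ths b \<nu> (int i + 2)) (vec (Suc (Suc i))) + scale (phi a b c \<nu> (int i + 2)) (vec (Suc i))"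
    proof (rule B_step[where h = "eta a b c \<nu>" and z = "zeta a b c \<nu>", OF A_u A_vec])
      show "A (vec (Suc i)) = vec (Suc (Suc i)) + scale (th a \<nu> (int i + 1)) (vec (Suc i))"
        using A_vec[of "Suc i"] by (simp only: int_Suc)
      show "B (vec i) = scale (ths b \<nu> (int i)) (vec i) + u"
        using less[of i] 3 by (simp add: u_def)
      show "B (vec (Suc i)) = scale (ths b \<nu> (int i + 1)) (vec (Suc i)) + scale (phi a b c \<nu> (int i + 1)) (vec i)"
        using less[of "Suc i"] 3 by (simp only: int_Suc diff_Suc_1 lessI)
    qed (rule rac_delta_vec rac_alpha_vec th_diff_square ths_second_diff
        phi_zeta_relation[OF two_nonzero] phi_second_diff[OF two_nonzero])+
    then show ?thesis
      using 3 by (simp only: int_Suc diff_Suc_1)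
  qed
qed

lemma racah_hom_poly_extend_vec:
  "racah_hom smult (MA a b c \<nu>) (MB a b c \<nu>) (MC a b c \<nu>) (MD a b c \<nu>) scale A B C D
     (poly_extend scale vec)"
proof -
  let ?F = "poly_extend scale vec"
  interpret F: module_hom smult scale ?F
    by (rule module_hom_poly_extend)
  have F_A: "?F (MA a b c \<nu> p) = A (?F p)" for p
    unfolding MA_def
    by (rule poly_extend_intertwines[OF A.module_hom_axioms])
      (simp add: MA_basis_def F.add F.scale poly_extend_mvec A_vec add.commute)
  have F_B: "?F (MB a b c \<nu> p) = B (?F p)" for p
    unfolding MB_def
    by (rule poly_extend_intertwines[OF B.module_hom_axioms])
      (simp add: MB_basis_def F.add F.scale poly_extend_mvec B_vec)
  have F_C: "?F (MC a b c \<nu> p) = C (?F p)" for p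
  proof -
    have "rac_delta A B C (?F p) = scale (eta a b c \<nu>) (?F p)"
      by (rule poly_extend_eigenvector[OF module_hom_rac_delta rac_delta_vec])
    then have "C (?F p) = scale (eta a b c \<nu>) (?F p) - A (?F p) - B (?F p)"
      by (simp add: rac_delta_def algebra_simps)
    then show ?thesis
      by (simp add: MC_def F.diff F.scale F_A F_B)
  qed
  have F_D: "?F (MD a b c \<nu> p) = D (?F p)" for p
    by (simp add: MD_def D_eq F.diff F.scale F_A F_B)
  show ?thesis
    unfolding racah_hom_def using F.module_hom_axioms F_A F_B F_C F_D by blast
qed

lemma poly_extend_vec_mvec_0: "poly_extend scale vec (mvec 0) = v"
  by (simp add: poly_extend_mvec vec_def)

end

theorem proposition3p7:
  fixes a b c \<nu> :: "'f::alg_closed_field"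
    and scale :: "'f \<Rightarrow> 'v::ab_group_add \<Rightarrow> 'v"
    and A B C D :: "'v \<Rightarrow> 'v"
    and v :: 'v
  assumes char: "(2::'f) \<noteq> 0"
    and V: "racah_module scale A B C D"
    and hB: "B v = scale (ths b \<nu> 0) v"
    and hBA: "(let w = A v - scale (th a \<nu> 0) v in B w - scale (ths b \<nu> 1) w)
                = scale (phi a b c \<nu> 1) v"
    and halpha: "rac_alpha A B C D v = scale (zeta a b c \<nu>) v"
    and hbeta: "rac_beta A B C D v = scale (zetas a b c \<nu>) v"
    and hdelta: "rac_delta A B C v = scale (eta a b c \<nu>) v"
  shows "\<exists>!f. racah_hom smult (MA a b c \<nu>) (MB a b c \<nu>) (MC a b c \<nu>) (MD a b c \<nu>)
                        scale A B C D f
             \<and> f (mvec 0) = v"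
proof -
  interpret racah_rep_vector scale A B C D a b c \<nu> v
    using char V hB hBA halpha hdelta by unfold_locales
  show ?thesis
  proof (rule ex1I)
    show "racah_hom smult (MA a b c \<nu>) (MB a b c \<nu>) (MC a b c \<nu>) (MD a b c \<nu>) scale A B C D
        (poly_extend scale vec) \<and> poly_extend scale vec (mvec 0) = v"
      using racah_hom_poly_extend_vec poly_extend_vec_mvec_0 by blast
  next
    fix g
    assume "racah_hom smult (MA a b c \<nu>) (MB a b c \<nu>) (MC a b c \<nu>) (MD a b c \<nu>) scale A B C D g
        \<and> g (mvec 0) = v"
    then show "g = poly_extend scale vec"
      using racah_hom_from_M_unique by (auto simp: vec_def)
  qed
qed

end
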